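(* Let $\mathcal{C}$ be a clutter and let $f\neq 0$ be a homogeneous binomial in $I(X)$ of the form $f=t_i^b-t^c$ with $b\in\mathbb{N}$, $c\in\mathbb{N}^s$ and $i\notin\mathrm{supp}(c)$. Then (a) $\deg(f)\geq q-1$; and (b) if $\deg(f)=q-1$, then $f=t_i^{q-1}-t_j^{q-1}$ for some $j\neq i$.
   Context: Let $K=\mathbb{F}_q$ be a finite field with $q\neq 2$ elements. A clutter $\mathcal{C}$ with vertex set $\{y_1,\ldots,y_n\}$ is a family of subsets (edges) of this set such that no edge is contained in another; let its edges be $f_1,\ldots,f_s$ ($s\geq 2$) with characteristic vectors $v_i=\sum_{y_j\in f_i}e_j\in\{0,1\}^n$ (these are pairwise distinct). For $x\in K^n$ write $x^{v_i}=\prod_j x_j^{v_{ij}}$. Let $X=\{[(x^{v_1},\ldots,x^{v_s})]\in\mathbb{P}^{s-1}: x\in (K^* )^n\}$, let $S=K[t_1,\ldots,t_s]$ with the standard grading, and let $I(X)$ be the ideal of $S$ generated by the homogeneous polynomials vanishing on $X$. For $c\in\mathbb{N}^s$, $t^c=t_1^{c_1}\cdots t_s^{c_s}$ and $\mathrm{supp}(c)=\{k: c_k\neq 0\}$. *)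

theory Defs
  imports Main
begin

definition clutter :: "nat \<Rightarrow> nat \<Rightarrow> (nat \<Rightarrow> nat set) \<Rightarrow> bool" where
  "clutter n s E \<longleftrightarrow> (\<forall>k<s. E k \<subseteq> {..<n}) \<and>
     (\<forall>k<s. \<forall>l<s. k \<noteq> l \<longrightarrow> \<not> E k \<subseteq> E l)"

(* x to the power v_k = product of x_j over the vertices y_j of the edge f_k *)
definition edge_mono :: "(nat \<Rightarrow> nat set) \<Rightarrow> nat \<Rightarrow> (nat \<Rightarrow> 'a::field) \<Rightarrow> 'a" where
  "edge_mono E k x = (\<Prod>j\<in>E k. x j)"

(* the points of X are (the classes of) (x to the v_1, ..., x to the v_s) with x in the torus *)
definition torus_pt :: "nat \<Rightarrow> (nat \<Rightarrow> 'a::field) \<Rightarrow> bool" where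
  "torus_pt n x \<longleftrightarrow> (\<forall>j<n. x j \<noteq> 0)"

definition mono_eval :: "nat \<Rightarrow> (nat \<Rightarrow> nat) \<Rightarrow> (nat \<Rightarrow> 'a::field) \<Rightarrow> 'a" where
  "mono_eval s a p = (\<Prod>k<s. p k ^ a k)"

(* The homogeneous binomial t_i^b - t^c (with b = |c|) lies in I(X): since it is homogeneous,
   this means it vanishes at every representative of every point of X. *)
definition binom_in_IX ::
  "'a::field itself \<Rightarrow> nat \<Rightarrow> nat \<Rightarrow> (nat \<Rightarrow> nat set) \<Rightarrow> nat \<Rightarrow> nat \<Rightarrow> (nat \<Rightarrow> nat) \<Rightarrow> bool" where
  "binom_in_IX T n s E i b c \<longleftrightarrow>
     (\<forall>x::nat \<Rightarrow> 'a. torus_pt n x \<longrightarrow>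
        edge_mono E i x ^ b = mono_eval s c (\<lambda>k. edge_mono E k x))"

end

theory Submission imports Defs "HOL-Computational_Algebra.Polynomial" begin

(* Write d(j) for the total c-weight of the edges containing the vertex y_j.
   Evaluating the binomial t_i^b - t^c at the torus point that is 1 everywhere except for
   an arbitrary nonzero value l at y_j gives l^b = l^(d j) if y_j lies in f_i, and
   1 = l^(d j) otherwise.  So the exponent b - d(j) resp. d(j) annihilates the whole
   multiplicative group K^*, and by the root bound for the polynomial x^m - 1 such an
   exponent is either 0 or at least q - 1.
   (a) Choose an edge f_k with c_k > 0; as k differs from i and C is a clutter, some vertex
       of f_i is not in f_k, and there b - d(j) >= c_k > 0, hence b >= q - 1.
   (b) If b = q - 1, every vertex weight is 0 or b; a purely combinatorial argument then
       shows that c is concentrated on the single edge f_k, so c_k = b = q - 1.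
   The file first proves the field-theoretic dichotomy, then the combinatorics of vertex
   weights, then the test-point evaluation, and finally assembles the theorem. *)

(* A positive exponent m with l^m = 1 for all nonzero l is at least q - 1, because the
   polynomial x^m - 1 of degree m then has all q - 1 units as roots. *)
lemma unit_exponent_ge_card:
  fixes m :: nat
  assumes "m > 0" and "\<forall>l::'a::{finite,field}. l \<noteq> 0 \<longrightarrow> l ^ m = 1"
  shows "card (UNIV::'a set) - 1 \<le> m"
proof -
  define p :: "'a poly" where "p = monom 1 m - 1"
  have "coeff p m = 1" using assms(1) by (simp add: p_def coeff_monom)
  hence "p \<noteq> 0" by auto
  have deg: "degree p \<le> m" unfolding p_def
    by (rule degree_diff_le) (auto simp: degree_monom_le)
  have roots: "UNIV - {0} \<subseteq> {x. poly p x = 0}"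
    using assms(2) by (auto simp: p_def poly_monom)
  have "card (UNIV - {0::'a}) \<le> card {x. poly p x = 0}" by (rule card_mono[OF _ roots]) simp
  also have "\<dots> \<le> degree p" by (rule card_poly_roots_bound) fact
  finally show ?thesis using deg by (simp add: card_Diff_singleton)
qed

lemma unit_exponent_zero_or_ge_card:
  assumes "\<forall>l::'a::{finite,field}. l \<noteq> 0 \<longrightarrow> l ^ m = 1"
  shows "m = 0 \<or> card (UNIV::'a set) - 1 \<le> m"
  using unit_exponent_ge_card[OF _ assms] by blast

(* The weight of the vertex y_j: the sum of c over the edges containing y_j.  It is the
   exponent of x_j in the monomial (x^{v_1}, ..., x^{v_s})^c. *)
definition vertex_weight :: "nat \<Rightarrow> (nat \<Rightarrow> nat set) \<Rightarrow> (nat \<Rightarrow> nat) \<Rightarrow> nat \<Rightarrow> nat" where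
  "vertex_weight s E c j = (\<Sum>k | k < s \<and> j \<in> E k. c k)"

lemma vertex_weight_le_total: "vertex_weight s E c j \<le> (\<Sum>k<s. c k)"
  unfolding vertex_weight_def by (rule sum_mono2) auto

lemma edge_weight_le_vertex_weight:
  assumes "k < s" and "j \<in> E k"
  shows "c k \<le> vertex_weight s E c j"
  unfolding vertex_weight_def by (rule member_le_sum) (use assms in auto)

lemma vertex_weight_plus_avoiding_edge:
  assumes "k < s" and "j \<notin> E k"
  shows "vertex_weight s E c j + c k \<le> (\<Sum>m<s. c m)"
proof -
  let ?A = "{k. k < s \<and> j \<in> E k}"
  have "vertex_weight s E c j + c k = sum c (insert k ?A)"
    unfolding vertex_weight_def using assms by simp
  also have "\<dots> \<le> (\<Sum>m<s. c m)" by (rule sum_mono2) (use assms in auto)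
  finally show ?thesis .
qed

(* Combinatorial core of (b): if every vertex weight is 0 or the total weight, then c is
   supported on a single edge, since any two edges of positive weight would have to
   contain each other, which a clutter forbids. *)
lemma extreme_vertex_weights_single_edge:
  assumes clutter: "clutter n s E"
    and c_vanish: "\<forall>k. s \<le> k \<longrightarrow> c k = 0"
    and k0: "k0 < s" "c k0 > 0"
    and extreme: "\<And>j. j < n \<Longrightarrow> vertex_weight s E c j = 0 \<or>
                                   vertex_weight s E c j = (\<Sum>k<s. c k)"
    and "k \<noteq> k0"
  shows "c k = 0"
proof (rule ccontr)
  assume ck: "c k \<noteq> 0"
  hence ks: "k < s" using c_vanish by (meson not_less)
  have "E k0 \<subseteq> E k"
  proof
    fix j assume j: "j \<in> E k0"
    hence "j < n" using clutter k0(1) by (auto simp: clutter_def)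
    moreover have "c k0 \<le> vertex_weight s E c j" by (rule edge_weight_le_vertex_weight) fact+
    ultimately have full: "vertex_weight s E c j = (\<Sum>k<s. c k)" using extreme k0(2) by fastforce
    show "j \<in> E k"
      using vertex_weight_plus_avoiding_edge[OF ks, of j E c] full ck by auto
  qed
  thus False using clutter k0(1) ks \<open>k \<noteq> k0\<close> by (auto simp: clutter_def)
qed

lemma prod_indicator_power:
  fixes l :: "'a::field" and s :: nat and c :: "nat \<Rightarrow> nat"
  shows "(\<Prod>k<s. (if P k then l else 1) ^ c k) = l ^ (\<Sum>k | k < s \<and> P k. c k)"
proof -
  have "(\<Prod>k<s. (if P k then l else 1) ^ c k) = (\<Prod>k<s. l ^ (if P k then c k else 0))"
    by (rule prod.cong) auto
  also have "\<dots> = l ^ (\<Sum>k<s. if P k then c k else 0)" by (simp add: power_sum)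
  also have "(\<Sum>k<s. if P k then c k else 0) = (\<Sum>k | k < s \<and> P k. c k)"
    by (simp add: sum.inter_filter[symmetric])
  finally show ?thesis .
qed

lemma binom_at_vertex_point:
  fixes l :: "'a::field"
  assumes "binom_in_IX TYPE('a) n s E i b c" and "i < s"
    and fin: "\<forall>k<s. finite (E k)" and "j < n" and "l \<noteq> 0"
  shows "(if j \<in> E i then l else 1) ^ b = l ^ vertex_weight s E c j"
proof -
  define x where "x = (\<lambda>m. if m = j then l else (1::'a))"
  have "torus_pt n x" using assms(4,5) by (simp add: torus_pt_def x_def)
  have edge: "edge_mono E k x = (if j \<in> E k then l else 1)" if "k < s" for k
    unfolding edge_mono_def x_def using fin that by (simp add: prod.delta)
  have "edge_mono E i x ^ b = mono_eval s c (\<lambda>k. edge_mono E k x)"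
    using assms(1) \<open>torus_pt n x\<close> unfolding binom_in_IX_def by blast
  also have "\<dots> = (\<Prod>k<s. (if j \<in> E k then l else 1) ^ c k)"
    unfolding mono_eval_def by (rule prod.cong) (auto simp: edge)
  also have "\<dots> = l ^ vertex_weight s E c j"
    unfolding vertex_weight_def by (rule prod_indicator_power)
  finally show ?thesis using edge[OF assms(2)] by simp
qed

lemma vertex_weight_dichotomy:
  assumes binom: "binom_in_IX TYPE('a::{finite,field}) n s E i b c" and "i < s"
    and fin: "\<forall>k<s. finite (E k)" and "j < n" and b: "b = (\<Sum>k<s. c k)"
  defines "w \<equiv> vertex_weight s E c j"
  shows "j \<in> E i \<Longrightarrow> b - w = 0 \<or> card (UNIV::'a set) - 1 \<le> b - w"
    and "j \<notin> E i \<Longrightarrow> w = 0 \<or> card (UNIV::'a set) - 1 \<le> w"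
proof -
  have eval: "(if j \<in> E i then l else 1) ^ b = l ^ w" if "(l::'a) \<noteq> 0" for l
    unfolding w_def using binom_at_vertex_point[OF binom assms(2) fin assms(4) that] .
  have "w \<le> b" unfolding w_def b by (rule vertex_weight_le_total)
  show "b - w = 0 \<or> card (UNIV::'a set) - 1 \<le> b - w" if "j \<in> E i"
  proof (rule unit_exponent_zero_or_ge_card, intro allI impI)
    fix l :: 'a assume "l \<noteq> 0"
    hence "l ^ w * l ^ (b - w) = l ^ w * 1"
      using eval \<open>w \<le> b\<close> that by (simp add: power_add[symmetric])
    thus "l ^ (b - w) = 1" using \<open>l \<noteq> 0\<close> by simp
  qed
  show "w = 0 \<or> card (UNIV::'a set) - 1 \<le> w" if "j \<notin> E i"
    by (rule unit_exponent_zero_or_ge_card) (use eval that in auto)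
qed

theorem lemma3p4:
  fixes n s i b :: nat and E :: "nat \<Rightarrow> nat set" and c :: "nat \<Rightarrow> nat"
  assumes "card (UNIV::'a set) \<noteq> 2"
    and "clutter n s E" and "s \<ge> 2"
    and "i < s" and "\<forall>k. s \<le> k \<longrightarrow> c k = 0" and "c i = 0"
    and "b = (\<Sum>k<s. c k)"
    and "\<not> (b = 0 \<and> (\<forall>k<s. c k = 0))"
    and "binom_in_IX TYPE('a::{finite,field}) n s E i b c"
  shows "b \<ge> card (UNIV::'a set) - 1 \<and>
         (b = card (UNIV::'a set) - 1 \<longrightarrow>
            (\<exists>j<s. j \<noteq> i \<and> c j = card (UNIV::'a set) - 1 \<and> (\<forall>k. k \<noteq> j \<longrightarrow> c k = 0)))"
proof -
  let ?q = "card (UNIV::'a set)"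
  have fin: "\<forall>k<s. finite (E k)"
    using assms(2) by (auto simp: clutter_def intro: finite_subset)
  note dichotomy = vertex_weight_dichotomy[OF assms(9,4) fin _ assms(7)]
  obtain k0 where k0: "k0 < s" "c k0 > 0" using assms(7,8) by (auto intro: gr0I)
  have "k0 \<noteq> i" using k0 assms(6) by auto
  then obtain j where j: "j \<in> E i" "j \<notin> E k0"
    using assms(2,4) k0(1) unfolding clutter_def by blast
  have "j < n" using assms(2,4) j(1) by (auto simp: clutter_def)
  have "vertex_weight s E c j + c k0 \<le> b"
    unfolding assms(7) by (rule vertex_weight_plus_avoiding_edge) fact+
  with dichotomy(1)[OF \<open>j < n\<close> j(1)] k0(2) have "?q - 1 \<le> b" by auto
  moreover have "c k0 = ?q - 1 \<and> (\<forall>k. k \<noteq> k0 \<longrightarrow> c k = 0)" if bq: "b = ?q - 1"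
  proof -
    have extreme: "vertex_weight s E c j' = 0 \<or> vertex_weight s E c j' = (\<Sum>k<s. c k)"
      if "j' < n" for j'
      using dichotomy[OF that] vertex_weight_le_total[of s E c j'] bq assms(7) by force
    have single: "\<forall>k. k \<noteq> k0 \<longrightarrow> c k = 0"
      using extreme_vertex_weights_single_edge[OF assms(2,5) k0 extreme] by blast
    have "b = c k0 + sum c ({..<s} - {k0})" unfolding assms(7) by (rule sum.remove) (use k0 in auto)
    also have "sum c ({..<s} - {k0}) = 0" using single by simp
    finally show ?thesis using bq single by simp
  qed
  ultimately show ?thesis using k0(1) \<open>k0 \<noteq> i\<close> by blast
qed

end
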